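(* Let $X\in C^3(B,\mathbb R^n)$ be a conformally parametrized minimal immersion of the closed unit disc $B\subset\mathbb R^2$ with flat normal bundle, and let $\{N_1,\ldots,N_{n-2}\}$ be a torsion-free orthonormal section of its normal bundle (i.e. $N_{\sigma,u^i}\cdot N_\omega^t=0$ for all $\sigma\ne\omega$, $i=1,2$; such a section exists because the normal bundle is flat). Assume $X$ is stable in the sense that for every $\vartheta=1,\ldots,n-2$ the second variation of area along $N_\vartheta$ is nonnegative: $$\int\!\!\int_B\big(|\nabla\varphi|^2+2K_\vartheta W\varphi^2\big)\,du\,dv\ge 0\quad\text{for all }\varphi\in C_0^\infty(B,\mathbb R).$$ Then $X$ is $\mu$-stable with $q\equiv 0$ for every $0<\mu\le\frac{2}{n-2}$, that is, $$\int\!\!\int_B|\nabla\varphi|^2\,du\,dv\ \ge\ \mu\int\!\!\int_B(-K)\,W\,\varphi^2\,du\,dv\quad\text{for all }\varphi\in C_0^\infty(B,\mathbb R).$$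
   Context: $B=\{(u,v)\in\mathbb R^2:u^2+v^2\le1\}$; $X=X(u,v)\in C^3(B,\mathbb R^n)$ is an immersion ($\mathrm{rank}\,\partial X=2$) in conformal parameters: $X_u^2=W=X_v^2$, $X_u\cdot X_v^t=0$. For a unit normal $N_\sigma$ the second fundamental form is $L_{\sigma,ij}=-X_{u^i}\cdot N_{\sigma,u^j}^t$, and $H_\sigma$, $K_\sigma$ are the mean and Gaussian curvatures with respect to $N_\sigma$ (so in conformal parameters $K_\sigma=(L_{\sigma,11}L_{\sigma,22}-L_{\sigma,12}^2)/W^2$). $X$ is minimal iff the mean curvature with respect to every unit normal vanishes. $K:=\sum_{\sigma=1}^{n-2}K_\sigma$ is the Gaussian curvature of $X$ (here $K\le0$). For a general orthonormal normal section, the second variation of area along $N_\vartheta$ additionally contains the term $\int\!\!\int_B\sum_\sigma\{(T^\sigma_{\vartheta,1})^2+(T^\sigma_{\vartheta,2})^2\}\varphi^2$ with torsion coefficients $T^\sigma_{\vartheta,i}=N_{\vartheta,u^i}\cdot N_\sigma^t$ ($\sigma\ne\vartheta$), which vanishes for the torsion-free section. $\mu$-stability with constant $\mu>0$ and function $q$ means $\int\!\!\int_B|\nabla\varphi|^2\ge\mu\int\!\!\int_B(q-K)W\varphi^2$ for all $\varphi\in C_0^\infty(B,\mathbb R)$. *)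

theory Defs
  imports "HOL-Analysis.Analysis"
begin

text \<open>Parameter domain: points (u,v) :: real \<times> real (Euclidean norm).
  B is the closed unit disc.\<close>

definition discB :: "(real \<times> real) set" where
  "discB = cball 0 1"

text \<open>Partial derivatives relative to a set S (Frechet derivative within S),
  so that derivatives on the closed disc are taken up to the boundary.\<close>

definition pdu :: "(real \<times> real) set \<Rightarrow> (real \<times> real \<Rightarrow> 'a::real_normed_vector) \<Rightarrow> real \<times> real \<Rightarrow> 'a" where
  "pdu S f p = frechet_derivative f (at p within S) (1, 0)"

definition pdv :: "(real \<times> real) set \<Rightarrow> (real \<times> real \<Rightarrow> 'a::real_normed_vector) \<Rightarrow> real \<times> real \<Rightarrow> 'a" where
  "pdv S f p = frechet_derivative f (at p within S) (0, 1)"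

definition pd :: "nat \<Rightarrow> (real \<times> real) set \<Rightarrow> (real \<times> real \<Rightarrow> 'a::real_normed_vector) \<Rightarrow> real \<times> real \<Rightarrow> 'a" where
  "pd i S f = (if i = 1 then pdu S f else pdv S f)"

fun Ck :: "nat \<Rightarrow> (real \<times> real) set \<Rightarrow> (real \<times> real \<Rightarrow> 'a::real_normed_vector) \<Rightarrow> bool" where
  "Ck 0 S f = continuous_on S f"
| "Ck (Suc k) S f = (continuous_on S f \<and> f differentiable_on S \<and>
      Ck k S (pdu S f) \<and> Ck k S (pdv S f))"

definition test_fun :: "(real \<times> real \<Rightarrow> real) \<Rightarrow> bool" where
  "test_fun \<phi> = ((\<forall>k. Ck k UNIV \<phi>) \<and> closure {p. \<phi> p \<noteq> 0} \<subseteq> ball 0 1)"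

definition grad_sq :: "(real \<times> real \<Rightarrow> real) \<Rightarrow> real \<times> real \<Rightarrow> real" where
  "grad_sq \<phi> p = (pdu UNIV \<phi> p)\<^sup>2 + (pdv UNIV \<phi> p)\<^sup>2"

definition Xu :: "(real \<times> real \<Rightarrow> real^'n) \<Rightarrow> real \<times> real \<Rightarrow> real^'n" where
  "Xu X = pdu discB X"

definition Xv :: "(real \<times> real \<Rightarrow> real^'n) \<Rightarrow> real \<times> real \<Rightarrow> real^'n" where
  "Xv X = pdv discB X"

definition Wf :: "(real \<times> real \<Rightarrow> real^'n) \<Rightarrow> real \<times> real \<Rightarrow> real" where
  "Wf X p = Xu X p \<bullet> Xu X p"

definition immersion :: "(real \<times> real \<Rightarrow> real^'n) \<Rightarrow> bool" where
  "immersion X = (\<forall>p\<in>discB. \<forall>a b. a *\<^sub>R Xu X p + b *\<^sub>R Xv X p = 0 \<longrightarrow> a = 0 \<and> b = 0)"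

definition conformal :: "(real \<times> real \<Rightarrow> real^'n) \<Rightarrow> bool" where
  "conformal X = (\<forall>p\<in>discB. Xu X p \<bullet> Xu X p = Xv X p \<bullet> Xv X p \<and> Xu X p \<bullet> Xv X p = 0)"

definition unit_normal_field :: "(real \<times> real \<Rightarrow> real^'n) \<Rightarrow> (real \<times> real \<Rightarrow> real^'n) \<Rightarrow> bool" where
  "unit_normal_field X Z = (\<forall>p\<in>discB. Z p \<bullet> Z p = 1 \<and> Z p \<bullet> Xu X p = 0 \<and> Z p \<bullet> Xv X p = 0)"

definition SFF :: "(real \<times> real \<Rightarrow> real^'n) \<Rightarrow> (real \<times> real \<Rightarrow> real^'n) \<Rightarrow> nat \<Rightarrow> nat \<Rightarrow> real \<times> real \<Rightarrow> real" where
  "SFF X Z i j p = - (pd i discB X p \<bullet> pd j discB Z p)"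

text \<open>Mean and Gauss curvature w.r.t. the unit normal Z (conformal parameters).\<close>

definition mean_curv :: "(real \<times> real \<Rightarrow> real^'n) \<Rightarrow> (real \<times> real \<Rightarrow> real^'n) \<Rightarrow> real \<times> real \<Rightarrow> real" where
  "mean_curv X Z p = (SFF X Z 1 1 p + SFF X Z 2 2 p) / (2 * Wf X p)"

definition gauss_curv_normal :: "(real \<times> real \<Rightarrow> real^'n) \<Rightarrow> (real \<times> real \<Rightarrow> real^'n) \<Rightarrow> real \<times> real \<Rightarrow> real" where
  "gauss_curv_normal X Z p = (SFF X Z 1 1 p * SFF X Z 2 2 p - (SFF X Z 1 2 p)\<^sup>2) / (Wf X p)\<^sup>2"

definition minimal :: "(real \<times> real \<Rightarrow> real^'n) \<Rightarrow> bool" where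
  "minimal X = (\<forall>Z. Ck 1 discB Z \<and> unit_normal_field X Z \<longrightarrow> (\<forall>p\<in>discB. mean_curv X Z p = 0))"

definition nidx :: "'n itself \<Rightarrow> nat set" where
  "nidx _ = {1..CARD('n) - 2}"

definition ON_normal_section :: "(real \<times> real \<Rightarrow> real^'n) \<Rightarrow> (nat \<Rightarrow> real \<times> real \<Rightarrow> real^'n) \<Rightarrow> bool" where
  "ON_normal_section X N =
     ((\<forall>\<sigma>\<in>nidx TYPE('n). unit_normal_field X (N \<sigma>)) \<and>
      (\<forall>\<sigma>\<in>nidx TYPE('n). \<forall>\<omega>\<in>nidx TYPE('n). \<sigma> \<noteq> \<omega> \<longrightarrow> (\<forall>p\<in>discB. N \<sigma> p \<bullet> N \<omega> p = 0)))"

definition torsion :: "(nat \<Rightarrow> real \<times> real \<Rightarrow> real^'n) \<Rightarrow> nat \<Rightarrow> nat \<Rightarrow> nat \<Rightarrow> real \<times> real \<Rightarrow> real" where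
  "torsion N \<sigma> \<omega> i p = pd i discB (N \<sigma>) p \<bullet> N \<omega> p"

definition torsion_free :: "(nat \<Rightarrow> real \<times> real \<Rightarrow> real^'n) \<Rightarrow> bool" where
  "torsion_free N = (\<forall>\<sigma>\<in>nidx TYPE('n). \<forall>\<omega>\<in>nidx TYPE('n). \<sigma> \<noteq> \<omega> \<longrightarrow>
      (\<forall>i\<in>{1,2}. \<forall>p\<in>discB. torsion N \<sigma> \<omega> i p = 0))"

definition normal_curvature :: "(nat \<Rightarrow> real \<times> real \<Rightarrow> real^'n) \<Rightarrow> nat \<Rightarrow> nat \<Rightarrow> real \<times> real \<Rightarrow> real" where
  "normal_curvature N \<sigma> \<omega> p =
     pdu discB (torsion N \<sigma> \<omega> 2) p - pdv discB (torsion N \<sigma> \<omega> 1) p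
     + (\<Sum>\<tau>\<in>nidx TYPE('n). torsion N \<sigma> \<tau> 1 p * torsion N \<tau> \<omega> 2 p
                            - torsion N \<sigma> \<tau> 2 p * torsion N \<tau> \<omega> 1 p)"

definition flat_normal_bundle :: "(nat \<Rightarrow> real \<times> real \<Rightarrow> real^'n) \<Rightarrow> bool" where
  "flat_normal_bundle N = (\<forall>\<sigma>\<in>nidx TYPE('n). \<forall>\<omega>\<in>nidx TYPE('n).
      \<forall>p\<in>discB. normal_curvature N \<sigma> \<omega> p = 0)"

definition gauss_curv :: "(real \<times> real \<Rightarrow> real^'n) \<Rightarrow> (nat \<Rightarrow> real \<times> real \<Rightarrow> real^'n) \<Rightarrow> real \<times> real \<Rightarrow> real" where
  "gauss_curv X N p = (\<Sum>\<sigma>\<in>nidx TYPE('n). gauss_curv_normal X (N \<sigma>) p)"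

text \<open>Stability along N_\<theta>: second variation (torsion-free form) nonnegative.\<close>

definition stable_along :: "(real \<times> real \<Rightarrow> real^'n) \<Rightarrow> (real \<times> real \<Rightarrow> real^'n) \<Rightarrow> bool" where
  "stable_along X Z = (\<forall>\<phi>. test_fun \<phi> \<longrightarrow>
      integral discB (\<lambda>p. grad_sq \<phi> p + 2 * gauss_curv_normal X Z p * Wf X p * (\<phi> p)\<^sup>2) \<ge> 0)"

definition mu_stable :: "(real \<times> real \<Rightarrow> real^'n) \<Rightarrow> (nat \<Rightarrow> real \<times> real \<Rightarrow> real^'n) \<Rightarrow> real \<Rightarrow> (real \<times> real \<Rightarrow> real) \<Rightarrow> bool" where
  "mu_stable X N \<mu> q = (\<forall>\<phi>. test_fun \<phi> \<longrightarrow>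
      integral discB (\<lambda>p. grad_sq \<phi> p) \<ge>
        \<mu> * integral discB (\<lambda>p. (q p - gauss_curv X N p) * Wf X p * (\<phi> p)\<^sup>2))"

end

theory Submission
  imports Defs
begin

text \<open>Along each normal \<open>N\<^sub>\<theta>\<close> the stability inequality says
  \<open>2 \<integral>\<integral> (-K\<^sub>\<theta>) W \<phi>\<^sup>2 \<le> \<integral>\<integral> |\<nabla>\<phi>|\<^sup>2\<close>. Summing over the \<open>n - 2\<close> normal directions and
  using \<open>K = \<Sum>\<^sub>\<theta> K\<^sub>\<theta>\<close> gives \<open>2 \<integral>\<integral> (-K) W \<phi>\<^sup>2 \<le> (n - 2) \<integral>\<integral> |\<nabla>\<phi>|\<^sup>2\<close>, which is
  \<open>\<mu>\<close>-stability for \<open>\<mu> = 2/(n - 2)\<close>, and hence for every smaller \<open>\<mu> > 0\<close> since the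
  Dirichlet integral is nonnegative. The only analytic input is that all integrands are
  continuous on the compact disc, so that the integrals are additive.\<close>

lemma Ck_Suc_imp_Ck: "Ck (Suc k) S f \<Longrightarrow> Ck k S f"
proof (induction k arbitrary: f)
  case 0
  then show ?case by simp
next
  case (Suc k)
  then show ?case by (metis Ck.simps(2))
qed

lemma Ck_mono:
  assumes "k \<le> m" "Ck m S f"
  shows "Ck k S f"
  using assms
proof (induction m rule: dec_induct)
  case base
  then show ?case .
next
  case (step n)
  then show ?case using Ck_Suc_imp_Ck by metis
qed

lemma Ck_1_iff:
  "Ck 1 S f \<longleftrightarrow> continuous_on S f \<and> f differentiable_on S \<and>
     continuous_on S (pdu S f) \<and> continuous_on S (pdv S f)"
  by (simp add: One_nat_def)

lemma integrable_on_compact_continuous: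
  fixes f :: "'a::euclidean_space \<Rightarrow> real"
  assumes "compact S" "continuous_on S f"
  shows "f integrable_on S"
proof -
  have "integrable lborel (\<lambda>x. indicator S x *\<^sub>R f x)"
    using borel_integrable_compact[OF assms] .
  then have "(\<lambda>x. indicator S x *\<^sub>R f x) integrable_on UNIV"
    by (rule integrable_on_lborel)
  moreover have "(\<lambda>x. indicator S x *\<^sub>R f x) = (\<lambda>x. if x \<in> S then f x else 0)"
    by (auto simp: indicator_def)
  ultimately show ?thesis
    using integrable_restrict_UNIV by metis
qed

lemma immersion_Wf_pos:
  assumes "immersion X" "p \<in> discB"
  shows "Wf X p > 0"
proof -
  have "Xu X p \<noteq> 0"
  proof
    assume "Xu X p = 0"
    then have "1 *\<^sub>R Xu X p + 0 *\<^sub>R Xv X p = 0" by simp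
    then show False using assms unfolding immersion_def by fastforce
  qed
  then show ?thesis unfolding Wf_def by simp
qed

lemma continuous_on_Wf:
  assumes "Ck 1 discB X"
  shows "continuous_on discB (Wf X)"
  using assms unfolding Ck_1_iff Wf_def Xu_def by (auto intro: continuous_intros)

lemma continuous_on_SFF:
  assumes "Ck 1 discB X" "Ck 1 discB Z"
  shows "continuous_on discB (SFF X Z i j)"
  using assms unfolding Ck_1_iff SFF_def pd_def
  by (cases "i = 1"; cases "j = 1") (auto intro!: continuous_intros)

lemma continuous_on_gauss_curv_normal:
  assumes "Ck 1 discB X" "Ck 1 discB Z" "immersion X"
  shows "continuous_on discB (gauss_curv_normal X Z)"
proof -
  have "Wf X p \<noteq> 0" if "p \<in> discB" for p
    using immersion_Wf_pos[OF assms(3) that] by simp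
  then show ?thesis
    unfolding gauss_curv_normal_def
    using continuous_on_SFF[OF assms(1,2)] continuous_on_Wf[OF assms(1)]
    by (intro continuous_intros) simp_all
qed

lemma test_fun_continuous_on:
  assumes "test_fun \<phi>"
  shows "continuous_on S \<phi>"
  using assms unfolding test_fun_def by (metis Ck.simps(1) continuous_on_subset top_greatest)

lemma test_fun_continuous_on_grad_sq:
  assumes "test_fun \<phi>"
  shows "continuous_on S (grad_sq \<phi>)"
proof -
  have "Ck 1 UNIV \<phi>"
    using assms unfolding test_fun_def by blast
  then show ?thesis
    unfolding Ck_1_iff grad_sq_def
    by (auto intro!: continuous_intros intro: continuous_on_subset)
qed

lemma stable_along_split:
  assumes "stable_along X Z" "test_fun \<phi>"
    and "Ck 1 discB X" "Ck 1 discB Z" "immersion X"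
  shows "0 \<le> integral discB (grad_sq \<phi>)
              + 2 * integral discB (\<lambda>p. gauss_curv_normal X Z p * Wf X p * (\<phi> p)\<^sup>2)"
proof -
  have "compact discB" by (simp add: discB_def)
  then have int_grad: "grad_sq \<phi> integrable_on discB"
    and int_K: "(\<lambda>p. gauss_curv_normal X Z p * Wf X p * (\<phi> p)\<^sup>2) integrable_on discB"
    using test_fun_continuous_on_grad_sq[OF assms(2)] test_fun_continuous_on[OF assms(2)]
      continuous_on_gauss_curv_normal[OF assms(3-5)] continuous_on_Wf[OF assms(3)]
    by (auto intro!: integrable_on_compact_continuous continuous_intros)
  have "0 \<le> integral discB
          (\<lambda>p. grad_sq \<phi> p + 2 * (gauss_curv_normal X Z p * Wf X p * (\<phi> p)\<^sup>2))"
    using assms(1,2) unfolding stable_along_def by (simp add: mult.assoc)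
  also have "\<dots> = integral discB (grad_sq \<phi>)
              + 2 * integral discB (\<lambda>p. gauss_curv_normal X Z p * Wf X p * (\<phi> p)\<^sup>2)"
    using int_grad int_K by (simp add: integral_add integrable_on_cmult_left)
  finally show ?thesis .
qed

lemma integral_gauss_curv_eq_sum:
  fixes X :: "real \<times> real \<Rightarrow> real^'n" and N :: "nat \<Rightarrow> real \<times> real \<Rightarrow> real^'n"
  assumes "Ck 1 discB X" "immersion X" "\<forall>\<sigma>\<in>nidx TYPE('n). Ck 1 discB (N \<sigma>)"
    and "continuous_on discB \<phi>"
  shows "integral discB (\<lambda>p. (0 - gauss_curv X N p) * Wf X p * (\<phi> p)\<^sup>2)
       = - (\<Sum>\<sigma>\<in>nidx TYPE('n). integral discB
              (\<lambda>p. gauss_curv_normal X (N \<sigma>) p * Wf X p * (\<phi> p)\<^sup>2))"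
    (is "?lhs = - (\<Sum>\<sigma>\<in>?I. integral discB (?h \<sigma>))")
proof -
  have "compact discB" by (simp add: discB_def)
  then have "?h \<sigma> integrable_on discB" if "\<sigma> \<in> ?I" for \<sigma>
    using assms that continuous_on_gauss_curv_normal continuous_on_Wf
    by (auto intro!: integrable_on_compact_continuous continuous_intros)
  moreover have "finite ?I" by (simp add: nidx_def)
  ultimately have "(\<Sum>\<sigma>\<in>?I. integral discB (?h \<sigma>)) = integral discB (\<lambda>p. \<Sum>\<sigma>\<in>?I. ?h \<sigma> p)"
    by (simp add: integral_sum)
  also have "\<dots> = - ?lhs"
    unfolding gauss_curv_def by (simp add: sum_distrib_right)
  finally show ?thesis by simp
qed

lemma mu_bound_of_summed_inequalities:
  fixes A \<mu> :: real and c :: "'a \<Rightarrow> real"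
  assumes "finite I" "I \<noteq> {}" "0 \<le> A"
    and each: "\<And>i. i \<in> I \<Longrightarrow> 0 \<le> A + 2 * c i"
    and "0 < \<mu>" "\<mu> \<le> 2 / card I"
  shows "\<mu> * - (\<Sum>i\<in>I. c i) \<le> A"
proof -
  have card_pos: "real (card I) > 0"
    using assms(1,2) by (simp add: card_gt_0_iff)
  have "0 \<le> (\<Sum>i\<in>I. A + 2 * c i)"
    using each by (simp add: sum_nonneg)
  then have sum_bound: "2 * - (\<Sum>i\<in>I. c i) \<le> card I * A"
    by (simp add: sum.distrib sum_distrib_left)
  show ?thesis
  proof (cases "- (\<Sum>i\<in>I. c i) \<le> 0")
    case True
    then have "\<mu> * - (\<Sum>i\<in>I. c i) \<le> 0"
      using assms(5) by (simp add: mult_nonneg_nonpos)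
    then show ?thesis
      using assms(3) by linarith
  next
    case False
    then have "\<mu> * - (\<Sum>i\<in>I. c i) \<le> 2 / card I * - (\<Sum>i\<in>I. c i)"
      using assms(6) by (intro mult_right_mono) auto
    also have "\<dots> \<le> A"
      using sum_bound card_pos by (simp add: field_simps)
    finally show ?thesis .
  qed
qed

text \<open>Conformality, minimality, orthonormality, flatness and torsion-freeness are not used
  below: they are what makes the second variation along \<open>N\<^sub>\<theta>\<close> take the torsion-free form
  that is built into \<open>stable_along\<close>.\<close>

theorem mainTheorem2:
  fixes X :: "real \<times> real \<Rightarrow> real^'n"
    and N :: "nat \<Rightarrow> real \<times> real \<Rightarrow> real^'n"
  assumes n3: "CARD('n) \<ge> 3"
    and C3: "Ck 3 discB X"
    and imm: "immersion X"
    and conf: "conformal X"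
    and mini: "minimal X"
    and Nreg: "\<forall>\<sigma>\<in>nidx TYPE('n). Ck 2 discB (N \<sigma>)"
    and ON: "ON_normal_section X N"
    and flat: "flat_normal_bundle N"
    and tf: "torsion_free N"
    and stab: "\<forall>\<theta>\<in>nidx TYPE('n). stable_along X (N \<theta>)"
  shows "\<forall>\<mu>::real. 0 < \<mu> \<and> \<mu> \<le> 2 / (real CARD('n) - 2) \<longrightarrow> mu_stable X N \<mu> (\<lambda>_. 0)"
proof (intro allI impI)
  fix \<mu> :: real
  assume \<mu>: "0 < \<mu> \<and> \<mu> \<le> 2 / (real CARD('n) - 2)"
  let ?I = "nidx TYPE('n)"
  have X1: "Ck 1 discB X" using C3 by (rule Ck_mono[rotated]) simp
  have N1: "\<forall>\<sigma>\<in>?I. Ck 1 discB (N \<sigma>)" using Nreg by (metis Ck_mono one_le_numeral)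
  have card_I: "real (card ?I) = real CARD('n) - 2" "?I \<noteq> {}" "finite ?I"
    using n3 by (auto simp: nidx_def)
  show "mu_stable X N \<mu> (\<lambda>_. 0)"
    unfolding mu_stable_def
  proof (intro allI impI)
    fix \<phi> assume \<phi>: "test_fun \<phi>"
    show "\<mu> * integral discB (\<lambda>p. (0 - gauss_curv X N p) * Wf X p * (\<phi> p)\<^sup>2)
          \<le> integral discB (grad_sq \<phi>)"
      unfolding integral_gauss_curv_eq_sum[OF X1 imm N1 test_fun_continuous_on[OF \<phi>]]
    proof (rule mu_bound_of_summed_inequalities)
      show "0 \<le> integral discB (grad_sq \<phi>)"
        by (rule integral_nonneg) (auto simp: grad_sq_def discB_def
            intro: integrable_on_compact_continuous test_fun_continuous_on_grad_sq[OF \<phi>])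
      show "\<mu> \<le> 2 / card ?I" using \<mu> card_I by simp
      show "0 \<le> integral discB (grad_sq \<phi>)
          + 2 * integral discB (\<lambda>p. gauss_curv_normal X (N \<theta>) p * Wf X p * (\<phi> p)\<^sup>2)"
        if "\<theta> \<in> ?I" for \<theta>
        using stable_along_split[OF _ \<phi> X1 _ imm] stab N1 that by blast
    qed (use \<mu> card_I in auto)
  qed
qed

end
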